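(* Let $G$ be a graph of order $n\ge 3$ with no isolated vertices and $b_{tR}(G)<\infty$, and suppose $\gamma_{tR}(G)=4$ (equivalently, $\Delta(G)\le n-2$ and there exist adjacent $u,v$ with $N[u]\cup N[v]=V(G)$). Then $b_{tR}(G)=b_t(G)$.
   Context: A TRDF on $G=(V,E)$ is a function $f:V\to\{0,1,2\}$ such that every $v$ with $f(v)=0$ has a neighbor $u$ with $f(u)=2$ and the subgraph induced by $\{v:f(v)>0\}$ has no isolated vertices; $\gamma_{tR}(G)$ is its minimum weight. $b_{tR}(G)$ is the minimum $|E'|$ such that $G-E'$ has no isolated vertices and $\gamma_{tR}(G-E')>\gamma_{tR}(G)$ ($\infty$ if none). $\gamma_t$ is the total domination number, and the total bondage number $b_t(G)$ is the minimum $|E'|$ such that $G-E'$ has no isolated vertices and $\gamma_t(G-E')>\gamma_t(G)$. *)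

theory Defs
  imports Main "HOL-Library.Extended_Nat"
begin

definition graph :: "'a set \<Rightarrow> 'a set set \<Rightarrow> bool" where
  "graph V E \<longleftrightarrow> finite V \<and> (\<forall>e\<in>E. e \<subseteq> V \<and> card e = 2)"

definition adj :: "'a set set \<Rightarrow> 'a \<Rightarrow> 'a \<Rightarrow> bool" where
  "adj E u v \<longleftrightarrow> {u, v} \<in> E"

definition no_isolated :: "'a set \<Rightarrow> 'a set set \<Rightarrow> bool" where
  "no_isolated V E \<longleftrightarrow> (\<forall>v\<in>V. \<exists>u\<in>V. adj E v u)"

definition trdf :: "'a set \<Rightarrow> 'a set set \<Rightarrow> ('a \<Rightarrow> nat) \<Rightarrow> bool" where
  "trdf V E f \<longleftrightarrow>
     (\<forall>v\<in>V. f v \<in> {0, 1, 2}) \<and>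
     (\<forall>v\<in>V. f v = 0 \<longrightarrow> (\<exists>u\<in>V. adj E v u \<and> f u = 2)) \<and>
     (\<forall>v\<in>V. f v > 0 \<longrightarrow> (\<exists>u\<in>V. adj E v u \<and> f u > 0))"

definition weight :: "'a set \<Rightarrow> ('a \<Rightarrow> nat) \<Rightarrow> nat" where
  "weight V f = (\<Sum>v\<in>V. f v)"

definition gamma_tR :: "'a set \<Rightarrow> 'a set set \<Rightarrow> nat" where
  "gamma_tR V E = (LEAST w. \<exists>f. trdf V E f \<and> weight V f = w)"

definition total_dom_set :: "'a set \<Rightarrow> 'a set set \<Rightarrow> 'a set \<Rightarrow> bool" where
  "total_dom_set V E S \<longleftrightarrow> S \<subseteq> V \<and> (\<forall>v\<in>V. \<exists>u\<in>S. adj E v u)"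

definition gamma_t :: "'a set \<Rightarrow> 'a set set \<Rightarrow> nat" where
  "gamma_t V E = (LEAST k. \<exists>S. total_dom_set V E S \<and> card S = k)"

text \<open>Bondage numbers; the infimum of the empty set of extended naturals is \<infinity>.\<close>
definition b_tR :: "'a set \<Rightarrow> 'a set set \<Rightarrow> enat" where
  "b_tR V E = Inf {enat (card E') | E'. E' \<subseteq> E \<and> no_isolated V (E - E') \<and>
                    gamma_tR V (E - E') > gamma_tR V E}"

definition b_t :: "'a set \<Rightarrow> 'a set set \<Rightarrow> enat" where
  "b_t V E = Inf {enat (card E') | E'. E' \<subseteq> E \<and> no_isolated V (E - E') \<and>
                    gamma_t V (E - E') > gamma_t V E}"

end

theory Submission
  imports Defs
begin

text \<open>
  On at least five vertices, a TRDF of weight at most 4 must use the value 2 at some vertex a,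
  and a positive neighbour b of a; the weight bound leaves no room for any other 2 or for any
  other pair of adjacent positive vertices, so {a, b} is a total dominating set. Conversely,
  labelling a total dominating set of size 2 with 2 gives a TRDF of weight 4. Hence on every
  spanning subgraph without isolated vertices, \<open>\<gamma>\<^sub>t\<^sub>R \<le> 4\<close> iff \<open>\<gamma>\<^sub>t \<le> 2\<close>, and since
  \<open>\<gamma>\<^sub>t \<ge> 2\<close> always, \<open>\<gamma>\<^sub>t\<^sub>R(G) = 4\<close> forces \<open>\<gamma>\<^sub>t(G) = 2\<close>: the edge sets counted by the two
  bondage numbers coincide. Five vertices are available because \<open>\<gamma>\<^sub>t\<^sub>R \<le> n\<close> and some
  spanning subgraph has \<open>\<gamma>\<^sub>t\<^sub>R > 4\<close>.
\<close>

lemma adj_commute: "adj E u v = adj E v u"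
  unfolding adj_def by (simp add: insert_commute)

lemma not_adj_self: "graph V E \<Longrightarrow> \<not> adj E v v"
  unfolding graph_def adj_def by fastforce

lemma graph_Diff: "graph V E \<Longrightarrow> graph V (E - F)"
  unfolding graph_def by auto

lemma trdf_const_one: "no_isolated V E \<Longrightarrow> trdf V E (\<lambda>_. 1)"
  unfolding trdf_def no_isolated_def by auto

lemma gamma_tR_attained: "no_isolated V E \<Longrightarrow> \<exists>f. trdf V E f \<and> weight V f = gamma_tR V E"
  unfolding gamma_tR_def by (rule LeastI_ex) (use trdf_const_one in blast)

lemma gamma_tR_le: "trdf V E f \<Longrightarrow> gamma_tR V E \<le> weight V f"
  unfolding gamma_tR_def by (rule Least_le) blast

lemma gamma_tR_le_card: "no_isolated V E \<Longrightarrow> gamma_tR V E \<le> card V"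
  using gamma_tR_le[OF trdf_const_one] by (simp add: weight_def)

lemma gamma_t_attained: "no_isolated V E \<Longrightarrow> \<exists>S. total_dom_set V E S \<and> card S = gamma_t V E"
  unfolding gamma_t_def
  by (rule LeastI_ex) (auto simp: total_dom_set_def no_isolated_def)

lemma gamma_t_le: "total_dom_set V E S \<Longrightarrow> gamma_t V E \<le> card S"
  unfolding gamma_t_def by (rule Least_le) blast

lemma card_total_dom_set_ge_2:
  assumes "graph V E" "V \<noteq> {}" "total_dom_set V E S"
  shows "2 \<le> card S"
proof -
  have "finite S"
    using assms unfolding graph_def total_dom_set_def by (meson finite_subset)
  obtain v where "v \<in> V" using assms(2) by blast
  then obtain u where u: "u \<in> S" "adj E v u" using assms(3) unfolding total_dom_set_def by blast
  then have "u \<in> V" using assms(3) unfolding total_dom_set_def by blast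
  then obtain w where w: "w \<in> S" "adj E u w" using assms(3) unfolding total_dom_set_def by blast
  have "w \<noteq> u" using w not_adj_self[OF assms(1)] by blast
  then have "card {u, w} = 2" by simp
  moreover have "card {u, w} \<le> card S" using u w \<open>finite S\<close> by (intro card_mono) auto
  ultimately show ?thesis by simp
qed

lemma gamma_t_ge_2:
  assumes "graph V E" "no_isolated V E" "V \<noteq> {}"
  shows "2 \<le> gamma_t V E"
  using gamma_t_attained[OF assms(2)] card_total_dom_set_ge_2[OF assms(1,3)] by metis

lemma sum_le_weight: "finite V \<Longrightarrow> A \<subseteq> V \<Longrightarrow> sum f A \<le> weight V f"
  unfolding weight_def by (rule sum_mono2) auto

lemma trdf_has_2_if_weight_less_card:
  assumes "trdf V E f" "weight V f < card V"
  shows "\<exists>a\<in>V. f a = 2"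
proof (rule ccontr)
  assume "\<not> (\<exists>a\<in>V. f a = 2)"
  with assms(1) have "\<forall>v\<in>V. f v = 1" unfolding trdf_def by fastforce
  then have "weight V f = card V" by (simp add: weight_def)
  with assms(2) show False by simp
qed

lemma total_dom_set_of_trdf_weight_le_4:
  assumes g: "graph V E" and f: "trdf V E f" and w: "weight V f \<le> 4"
    and a: "a \<in> V" "f a = 2" and b: "b \<in> V" "adj E a b" "0 < f b"
  shows "total_dom_set V E {a, b}"
  unfolding total_dom_set_def
proof (intro conjI ballI)
  show "{a, b} \<subseteq> V" using a b by blast
next
  have "finite V" using g unfolding graph_def by blast
  have "a \<noteq> b" using b not_adj_self[OF g] by blast
  fix v assume v: "v \<in> V"
  show "\<exists>u\<in>{a, b}. adj E v u"
  proof (cases "f v = 0")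
    case True
    then obtain w where w: "w \<in> V" "adj E v w" "f w = 2" using f v unfolding trdf_def by blast
    have "w \<in> {a, b}"
    proof (rule ccontr)
      assume "w \<notin> {a, b}"
      then have "sum f {a, b, w} = f a + f b + f w" using \<open>a \<noteq> b\<close> by (auto simp: ac_simps)
      moreover have "sum f {a, b, w} \<le> weight V f"
        using a b w \<open>finite V\<close> by (intro sum_le_weight) auto
      ultimately show False using w a b \<open>weight V f \<le> 4\<close> by linarith
    qed
    with w show ?thesis by blast
  next
    case False
    show ?thesis
    proof (cases "v \<in> {a, b}")
      case True
      then show ?thesis using b(2) adj_commute[of E a b] by auto
    next
      case v_other: False
      obtain w where w: "w \<in> V" "adj E v w" "0 < f w"
        using f v False unfolding trdf_def by blast
      have "w \<noteq> v" using w not_adj_self[OF g] by blast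
      have "w \<in> {a, b}"
      proof (rule ccontr)
        assume "w \<notin> {a, b}"
        then have "sum f {a, b, w, v} = f a + f b + f w + f v"
          using \<open>a \<noteq> b\<close> \<open>w \<noteq> v\<close> v_other by (auto simp: ac_simps)
        moreover have "sum f {a, b, w, v} \<le> weight V f"
          using a b w v \<open>finite V\<close> by (intro sum_le_weight) auto
        ultimately show False using w a b False \<open>weight V f \<le> 4\<close> by linarith
      qed
      with w show ?thesis by blast
    qed
  qed
qed

lemma gamma_t_le_2_if_gamma_tR_le_4:
  assumes g: "graph V E" and "no_isolated V E" "5 \<le> card V" "gamma_tR V E \<le> 4"
  shows "gamma_t V E \<le> 2"
proof -
  obtain f where f: "trdf V E f" "weight V f \<le> 4"
    using gamma_tR_attained[OF assms(2)] assms(4) by auto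
  then obtain a where a: "a \<in> V" "f a = 2"
    using trdf_has_2_if_weight_less_card assms(3) by fastforce
  then obtain b where b: "b \<in> V" "adj E a b" "0 < f b"
    using f(1) unfolding trdf_def by force
  have "a \<noteq> b" using b not_adj_self[OF g] by blast
  then have "gamma_t V E \<le> card {a, b}"
    using gamma_t_le total_dom_set_of_trdf_weight_le_4[OF g f a b] by blast
  with \<open>a \<noteq> b\<close> show ?thesis by simp
qed

lemma gamma_tR_le_4_if_gamma_t_le_2:
  assumes g: "graph V E" and "no_isolated V E" "V \<noteq> {}" "gamma_t V E \<le> 2"
  shows "gamma_tR V E \<le> 4"
proof -
  obtain S where S: "total_dom_set V E S" "card S \<le> 2"
    using gamma_t_attained[OF assms(2)] assms(4) by auto
  have "card S = 2" using card_total_dom_set_ge_2[OF g assms(3) S(1)] S(2) by simp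
  have "S \<subseteq> V" "finite V" using S g unfolding total_dom_set_def graph_def by blast+
  define f where "f v = (if v \<in> S then 2 else 0 :: nat)" for v
  have "trdf V E f"
    using S(1) \<open>S \<subseteq> V\<close> unfolding trdf_def f_def total_dom_set_def by auto
  moreover have "weight V f = 4"
    using \<open>S \<subseteq> V\<close> \<open>finite V\<close> \<open>card S = 2\<close>
    by (simp add: weight_def f_def sum.If_cases Int_absorb1)
  ultimately show ?thesis using gamma_tR_le by metis
qed

lemma gamma_tR_le_4_iff_gamma_t_le_2:
  assumes "graph V E" "no_isolated V E" "5 \<le> card V"
  shows "gamma_tR V E \<le> 4 \<longleftrightarrow> gamma_t V E \<le> 2"
  using gamma_t_le_2_if_gamma_tR_le_4[OF assms] gamma_tR_le_4_if_gamma_t_le_2[OF assms(1,2)] assms(3)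
  by fastforce

lemma bondage_set_exists_if_b_tR_finite:
  assumes "b_tR V E < \<infinity>"
  obtains F where "F \<subseteq> E" "no_isolated V (E - F)" "gamma_tR V E < gamma_tR V (E - F)"
proof -
  have "{enat (card E') | E'. E' \<subseteq> E \<and> no_isolated V (E - E') \<and>
          gamma_tR V (E - E') > gamma_tR V E} \<noteq> {}"
    using assms unfolding b_tR_def by (metis Inf_empty less_irrefl top_enat_def)
  then show ?thesis using that by blast
qed

theorem mainTheorem6:
  fixes V :: "'a set" and E :: "'a set set"
  assumes "graph V E"
    and "card V \<ge> 3"
    and "no_isolated V E"
    and "b_tR V E < \<infinity>"
    and "gamma_tR V E = 4"
  shows "b_tR V E = b_t V E"
proof -
  obtain F where F: "no_isolated V (E - F)" "4 < gamma_tR V (E - F)"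
    using bondage_set_exists_if_b_tR_finite[OF assms(4)] assms(5) by metis
  have "5 \<le> card V" using gamma_tR_le_card[OF F(1)] F(2) by linarith
  then have "V \<noteq> {}" by auto
  have "gamma_t V E = 2"
    using gamma_tR_le_4_iff_gamma_t_le_2[OF assms(1,3) \<open>5 \<le> card V\<close>] assms(5)
      gamma_t_ge_2[OF assms(1,3) \<open>V \<noteq> {}\<close>] by linarith
  have "4 < gamma_tR V (E - F') \<longleftrightarrow> 2 < gamma_t V (E - F')"
    if "no_isolated V (E - F')" for F'
    using gamma_tR_le_4_iff_gamma_t_le_2[OF graph_Diff[OF assms(1)] that \<open>5 \<le> card V\<close>]
    by linarith
  then have "{enat (card E') | E'. E' \<subseteq> E \<and> no_isolated V (E - E') \<and> 4 < gamma_tR V (E - E')} =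
      {enat (card E') | E'. E' \<subseteq> E \<and> no_isolated V (E - E') \<and> 2 < gamma_t V (E - E')}"
    by blast
  then show ?thesis
    unfolding b_tR_def b_t_def assms(5) \<open>gamma_t V E = 2\<close> by (rule arg_cong)
qed

end
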